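(* An integral domain $D$ is a $\ast$-SH domain of type $1$ if and only if $D$ is a $\ast$-weakly Krull domain.
   Context: $\ast$ is a star operation on $D$ of finite character. A $\ast$-ideal is a nonzero fractional ideal $I$ with $I^\ast=I$; it is of finite type if $I=J^\ast$ for some nonzero finitely generated $J$. A maximal $\ast$-ideal is an integral $\ast$-ideal maximal among proper integral $\ast$-ideals. A $\ast$-homog ideal is an integral $\ast$-ideal $I$ of finite type with $I\subsetneq D$ such that $(J+L)^{\ast}\neq D$ for every pair $J,L$ of proper integral $\ast$-ideals of finite type containing $I$; such $I$ lies in a unique maximal $\ast$-ideal $M(I)$. $D$ is a $\ast$-SH domain if every $xD$, $x$ a nonzero nonunit, is a $\ast$-product $(I_1\cdots I_n)^\ast$ of finitely many $\ast$-homog ideals. A $\ast$-homog ideal $I$ is of type $1$ if for every $x\in M(I)\setminus\{0\}$ there is a positive integer $n$ with $x^nD_{M(I)}\cap D\subseteq I$. $D$ is a $\ast$-SH domain of type $1$ if for every nonzero nonunit $x$, $xD$ is a $\ast$-product of finitely many $\ast$-homog ideals of type $1$. $D$ is a $\ast$-weakly Krull domain if $D$ is a $\ast$-SH domain in which every maximal $\ast$-ideal has height $1$. *)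

theory Defs
  imports Main
begin

text \<open>An integral domain D is modelled as a subring of a field of type 'k
  which is its quotient field. Fractional ideals are D-submodules of 'k.\<close>

definition subring_of_field :: "'k::field set \<Rightarrow> bool" where
  "subring_of_field D \<longleftrightarrow> 0 \<in> D \<and> 1 \<in> D \<and>
     (\<forall>a\<in>D. \<forall>b\<in>D. a + b \<in> D \<and> a - b \<in> D \<and> a * b \<in> D)"

definition quotient_field_of :: "'k::field set \<Rightarrow> bool" where
  "quotient_field_of D \<longleftrightarrow> (\<forall>k. \<exists>a\<in>D. \<exists>b\<in>D. b \<noteq> 0 \<and> k = a / b)"

definition integral_domain_qf :: "'k::field set \<Rightarrow> bool" where
  "integral_domain_qf D \<longleftrightarrow> subring_of_field D \<and> quotient_field_of D"

definition is_unit_in :: "'k::field set \<Rightarrow> 'k \<Rightarrow> bool" where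
  "is_unit_in D x \<longleftrightarrow> x \<in> D \<and> (\<exists>y\<in>D. x * y = 1)"

definition gen :: "'k::field set \<Rightarrow> 'k set \<Rightarrow> 'k set" where
  "gen D S = {x. \<exists>F a. finite F \<and> F \<subseteq> S \<and> (\<forall>s\<in>F. a s \<in> D) \<and> x = (\<Sum>s\<in>F. a s * s)}"

definition principal :: "'k::field set \<Rightarrow> 'k \<Rightarrow> 'k set" where
  "principal D x = (\<lambda>d. x * d) ` D"

definition smult_set :: "'k::field \<Rightarrow> 'k set \<Rightarrow> 'k set" where
  "smult_set x I = (\<lambda>i. x * i) ` I"

definition submodule :: "'k::field set \<Rightarrow> 'k set \<Rightarrow> bool" where
  "submodule D I \<longleftrightarrow> 0 \<in> I \<and> (\<forall>a\<in>I. \<forall>b\<in>I. a + b \<in> I) \<and> (\<forall>d\<in>D. \<forall>a\<in>I. d * a \<in> I)"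

definition frac_ideal :: "'k::field set \<Rightarrow> 'k set \<Rightarrow> bool" where
  "frac_ideal D I \<longleftrightarrow> submodule D I \<and> I \<noteq> {0} \<and>
     (\<exists>d\<in>D. d \<noteq> 0 \<and> (\<forall>a\<in>I. d * a \<in> D))"

definition finitely_generated :: "'k::field set \<Rightarrow> 'k set \<Rightarrow> bool" where
  "finitely_generated D I \<longleftrightarrow> (\<exists>F. finite F \<and> I = gen D F)"

definition star_operation :: "'k::field set \<Rightarrow> ('k set \<Rightarrow> 'k set) \<Rightarrow> bool" where
  "star_operation D star \<longleftrightarrow>
     (\<forall>I. frac_ideal D I \<longrightarrow> frac_ideal D (star I)) \<and>
     (\<forall>x. x \<noteq> 0 \<longrightarrow> star (principal D x) = principal D x) \<and>
     (\<forall>x I. x \<noteq> 0 \<longrightarrow> frac_ideal D I \<longrightarrow> star (smult_set x I) = smult_set x (star I)) \<and>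
     (\<forall>I. frac_ideal D I \<longrightarrow> I \<subseteq> star I) \<and>
     (\<forall>I J. frac_ideal D I \<longrightarrow> frac_ideal D J \<longrightarrow> I \<subseteq> J \<longrightarrow> star I \<subseteq> star J) \<and>
     (\<forall>I. frac_ideal D I \<longrightarrow> star (star I) = star I)"

definition finite_character :: "'k::field set \<Rightarrow> ('k set \<Rightarrow> 'k set) \<Rightarrow> bool" where
  "finite_character D star \<longleftrightarrow>
     (\<forall>I. frac_ideal D I \<longrightarrow>
        star I = \<Union>{star J | J. J \<subseteq> I \<and> J \<noteq> {0} \<and> finitely_generated D J})"

definition star_ideal :: "'k::field set \<Rightarrow> ('k set \<Rightarrow> 'k set) \<Rightarrow> 'k set \<Rightarrow> bool" where
  "star_ideal D star I \<longleftrightarrow> frac_ideal D I \<and> star I = I"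

definition finite_type :: "'k::field set \<Rightarrow> ('k set \<Rightarrow> 'k set) \<Rightarrow> 'k set \<Rightarrow> bool" where
  "finite_type D star I \<longleftrightarrow>
     (\<exists>J. J \<noteq> {0} \<and> finitely_generated D J \<and> I = star J)"

definition integral_star_ideal :: "'k::field set \<Rightarrow> ('k set \<Rightarrow> 'k set) \<Rightarrow> 'k set \<Rightarrow> bool" where
  "integral_star_ideal D star I \<longleftrightarrow> star_ideal D star I \<and> I \<subseteq> D"

definition maximal_star_ideal :: "'k::field set \<Rightarrow> ('k set \<Rightarrow> 'k set) \<Rightarrow> 'k set \<Rightarrow> bool" where
  "maximal_star_ideal D star M \<longleftrightarrow>
     integral_star_ideal D star M \<and> M \<noteq> D \<and>
     (\<forall>N. integral_star_ideal D star N \<and> N \<noteq> D \<and> M \<subseteq> N \<longrightarrow> N = M)"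

definition ideal_sum :: "'k::field set \<Rightarrow> 'k set \<Rightarrow> 'k set" where
  "ideal_sum J L = {j + l | j l. j \<in> J \<and> l \<in> L}"

definition ideal_prod :: "'k::field set \<Rightarrow> 'k set \<Rightarrow> 'k set \<Rightarrow> 'k set" where
  "ideal_prod D J L = gen D {j * l | j l. j \<in> J \<and> l \<in> L}"

definition ideal_prod_list :: "'k::field set \<Rightarrow> 'k set list \<Rightarrow> 'k set" where
  "ideal_prod_list D Is = foldr (ideal_prod D) Is D"

definition star_homog :: "'k::field set \<Rightarrow> ('k set \<Rightarrow> 'k set) \<Rightarrow> 'k set \<Rightarrow> bool" where
  "star_homog D star I \<longleftrightarrow>
     integral_star_ideal D star I \<and> finite_type D star I \<and> I \<noteq> D \<and>
     (\<forall>J L. integral_star_ideal D star J \<and> finite_type D star J \<and> J \<noteq> D \<and> I \<subseteq> J \<and>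
            integral_star_ideal D star L \<and> finite_type D star L \<and> L \<noteq> D \<and> I \<subseteq> L
            \<longrightarrow> star (ideal_sum J L) \<noteq> D)"

text \<open>The unique maximal star ideal containing a star-homog ideal.\<close>
definition M_of :: "'k::field set \<Rightarrow> ('k set \<Rightarrow> 'k set) \<Rightarrow> 'k set \<Rightarrow> 'k set" where
  "M_of D star I = (THE M. maximal_star_ideal D star M \<and> I \<subseteq> M)"

definition localization :: "'k::field set \<Rightarrow> 'k set \<Rightarrow> 'k set" where
  "localization D P = {a / s | a s. a \<in> D \<and> s \<in> D \<and> s \<notin> P}"

definition star_homog_type1 :: "'k::field set \<Rightarrow> ('k set \<Rightarrow> 'k set) \<Rightarrow> 'k set \<Rightarrow> bool" where
  "star_homog_type1 D star I \<longleftrightarrow> star_homog D star I \<and>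
     (\<forall>x \<in> M_of D star I - {0}. \<exists>n::nat. n > 0 \<and>
        smult_set (x ^ n) (localization D (M_of D star I)) \<inter> D \<subseteq> I)"

definition star_SH :: "'k::field set \<Rightarrow> ('k set \<Rightarrow> 'k set) \<Rightarrow> bool" where
  "star_SH D star \<longleftrightarrow>
     (\<forall>x\<in>D. x \<noteq> 0 \<and> \<not> is_unit_in D x \<longrightarrow>
        (\<exists>Is. (\<forall>I\<in>set Is. star_homog D star I) \<and>
              principal D x = star (ideal_prod_list D Is)))"

definition star_SH_type1 :: "'k::field set \<Rightarrow> ('k set \<Rightarrow> 'k set) \<Rightarrow> bool" where
  "star_SH_type1 D star \<longleftrightarrow>
     (\<forall>x\<in>D. x \<noteq> 0 \<and> \<not> is_unit_in D x \<longrightarrow>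
        (\<exists>Is. (\<forall>I\<in>set Is. star_homog_type1 D star I) \<and>
              principal D x = star (ideal_prod_list D Is)))"

definition prime_ideal :: "'k::field set \<Rightarrow> 'k set \<Rightarrow> bool" where
  "prime_ideal D P \<longleftrightarrow> submodule D P \<and> P \<subseteq> D \<and> P \<noteq> D \<and>
     (\<forall>a\<in>D. \<forall>b\<in>D. a * b \<in> P \<longrightarrow> a \<in> P \<or> b \<in> P)"

definition height_one :: "'k::field set \<Rightarrow> 'k set \<Rightarrow> bool" where
  "height_one D P \<longleftrightarrow> prime_ideal D P \<and> P \<noteq> {0} \<and>
     (\<forall>Q. prime_ideal D Q \<and> Q \<subseteq> P \<longrightarrow> Q = {0} \<or> Q = P)"

definition star_weakly_Krull :: "'k::field set \<Rightarrow> ('k set \<Rightarrow> 'k set) \<Rightarrow> bool" where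
  "star_weakly_Krull D star \<longleftrightarrow> star_SH D star \<and>
     (\<forall>M. maximal_star_ideal D star M \<longrightarrow> height_one D M)"

end

theory Submission
  imports Defs
begin

text \<open>Maximal star ideals are prime: if \<open>u \<notin> M\<close> and \<open>u z \<in> I\<close> for a star ideal
  \<open>I \<subseteq> M\<close>, the colon ideal \<open>(I : z)\<close> lies in no maximal star ideal, so its star is
  \<open>D\<close> and \<open>z \<in> I\<close>. Finite character forces a star-homog ideal \<open>I\<close> into a unique maximal
  star ideal \<open>M(I)\<close>.

  If every \<open>xD\<close> is a star product of type-1 homogs, a nonzero prime \<open>Q \<subseteq> M\<close> contains a
  factor \<open>I\<close> of some \<open>xD\<close> with \<open>x \<in> Q\<close>; then \<open>M = M(I)\<close>, and type 1 puts a power of each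
  element of \<open>M\<close> into \<open>I \<subseteq> Q\<close>, so \<open>Q = M\<close>. Conversely, if \<open>M(I)\<close> has height one it is
  minimal over \<open>I\<close>, so each \<open>y \<in> M(I)\<close> has \<open>y\<^sup>n s \<in> I\<close> with \<open>s \<notin> M(I)\<close>; for
  \<open>z = y\<^sup>n\<^sup>+\<^sup>1 a / t \<in> D\<close> with \<open>t \<notin> M(I)\<close> this gives \<open>s t z \<in> I\<close>, and the colon
  argument yields \<open>z \<in> I\<close>.\<close>

definition integral_ideal :: "'k::field set \<Rightarrow> 'k set \<Rightarrow> bool" where
  "integral_ideal D I \<longleftrightarrow> submodule D I \<and> I \<subseteq> D \<and> I \<noteq> {0}"

locale star_domain =
  fixes D :: "'k::field set" and star :: "'k set \<Rightarrow> 'k set"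
  assumes domain: "integral_domain_qf D"
    and star_operation: "star_operation D star"
    and finite_character: "finite_character D star"
begin

lemma zero_mem: "0 \<in> D"
  and one_mem: "1 \<in> D"
  and add_mem: "a \<in> D \<Longrightarrow> b \<in> D \<Longrightarrow> a + b \<in> D"
  and mult_mem: "a \<in> D \<Longrightarrow> b \<in> D \<Longrightarrow> a * b \<in> D"
  using domain unfolding integral_domain_qf_def subring_of_field_def by auto

lemma power_mem: "y \<in> D \<Longrightarrow> y ^ n \<in> D"
  by (induction n) (auto intro: mult_mem one_mem)

lemma fraction_exists: "\<exists>a\<in>D. \<exists>b\<in>D. b \<noteq> 0 \<and> k = a / b"
  using domain unfolding integral_domain_qf_def quotient_field_of_def by auto

lemma star_frac_ideal: "frac_ideal D I \<Longrightarrow> frac_ideal D (star I)"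
  and star_principal: "x \<noteq> 0 \<Longrightarrow> star (principal D x) = principal D x"
  and star_smult: "x \<noteq> 0 \<Longrightarrow> frac_ideal D I \<Longrightarrow> star (smult_set x I) = smult_set x (star I)"
  and star_extensive: "frac_ideal D I \<Longrightarrow> I \<subseteq> star I"
  and star_mono: "frac_ideal D I \<Longrightarrow> frac_ideal D J \<Longrightarrow> I \<subseteq> J \<Longrightarrow> star I \<subseteq> star J"
  and star_idem: "frac_ideal D I \<Longrightarrow> star (star I) = star I"
  using star_operation unfolding star_operation_def by auto

lemma star_finite_character:
  "frac_ideal D I \<Longrightarrow>
     star I = \<Union>{star J | J. J \<subseteq> I \<and> J \<noteq> {0} \<and> finitely_generated D J}"
  using finite_character unfolding finite_character_def by auto

lemma star_D: "star D = D"
proof -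
  have "principal D 1 = D" unfolding principal_def by auto
  then show ?thesis using star_principal[of 1] by simp
qed

lemma submodule_D: "submodule D D"
  unfolding submodule_def using zero_mem add_mem mult_mem by auto

lemma submodule_sum:
  assumes "submodule D P" "finite F" "\<forall>f\<in>F. g f \<in> P"
  shows "sum g F \<in> P"
  using assms(2,3) by induction (use assms(1) in \<open>auto simp: submodule_def\<close>)

lemma sum_mem: "finite F \<Longrightarrow> \<forall>f\<in>F. g f \<in> D \<Longrightarrow> sum g F \<in> D"
  using submodule_sum[OF submodule_D] by blast

lemma submodule_eq_D_if_one: "submodule D P \<Longrightarrow> P \<subseteq> D \<Longrightarrow> 1 \<in> P \<Longrightarrow> P = D"
  unfolding submodule_def by (metis mult.right_neutral subsetI subset_antisym)

lemma mem_gen: "s \<in> S \<Longrightarrow> s \<in> gen D S"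
  unfolding gen_def using one_mem by (auto intro!: exI[of _ "{s}"] exI[of _ "\<lambda>_. 1"])

lemma gen_mono: "S \<subseteq> T \<Longrightarrow> gen D S \<subseteq> gen D T"
  unfolding gen_def by blast

lemma gen_least: "submodule D P \<Longrightarrow> S \<subseteq> P \<Longrightarrow> gen D S \<subseteq> P"
  unfolding gen_def by (auto intro!: submodule_sum simp: submodule_def)

lemma sum_extend:
  fixes a :: "'k \<Rightarrow> 'k"
  assumes "finite G" "F \<subseteq> G"
  shows "(\<Sum>s\<in>F. a s * s) = (\<Sum>s\<in>G. (if s \<in> F then a s else 0) * s)"
proof -
  have "(\<Sum>s\<in>G. (if s \<in> F then a s else 0) * s) = (\<Sum>s\<in>G. if s \<in> F then a s * s else 0)"
    by (rule sum.cong) auto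
  also have "\<dots> = (\<Sum>s\<in>F. a s * s)"
    using sum.inter_restrict[OF assms(1), of "\<lambda>s. a s * s" F] assms by (simp add: Int_absorb1)
  finally show ?thesis by simp
qed

lemma gen_submodule: "submodule D (gen D S)"
  unfolding submodule_def
proof (intro conjI ballI)
  show "0 \<in> gen D S" unfolding gen_def by (auto intro!: exI[of _ "{}"])
next
  fix x y assume "x \<in> gen D S" "y \<in> gen D S"
  then obtain F1 a1 F2 a2 where h: "finite F1" "F1 \<subseteq> S" "\<forall>s\<in>F1. a1 s \<in> D" "x = (\<Sum>s\<in>F1. a1 s * s)"
    "finite F2" "F2 \<subseteq> S" "\<forall>s\<in>F2. a2 s \<in> D" "y = (\<Sum>s\<in>F2. a2 s * s)"
    unfolding gen_def by blast
  let ?G = "F1 \<union> F2"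
  let ?a = "\<lambda>s. (if s \<in> F1 then a1 s else 0) + (if s \<in> F2 then a2 s else 0)"
  have "x + y = (\<Sum>s\<in>?G. ?a s * s)"
    using sum_extend[of ?G F1 a1] sum_extend[of ?G F2 a2] h
    by (simp add: sum.distrib[symmetric] distrib_right)
  moreover have "\<forall>s\<in>?G. ?a s \<in> D" using h zero_mem add_mem by auto
  ultimately show "x + y \<in> gen D S" unfolding gen_def using h
    by (intro CollectI exI[of _ ?G] exI[of _ ?a]) auto
next
  fix d x assume "d \<in> D" "x \<in> gen D S"
  then obtain F a where h: "finite F" "F \<subseteq> S" "\<forall>s\<in>F. a s \<in> D" "x = (\<Sum>s\<in>F. a s * s)"
    unfolding gen_def by blast
  have "d * x = (\<Sum>s\<in>F. (d * a s) * s)" using h by (simp add: sum_distrib_left mult.assoc)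
  then show "d * x \<in> gen D S" unfolding gen_def using h \<open>d \<in> D\<close> mult_mem
    by (intro CollectI exI[of _ F] exI[of _ "\<lambda>s. d * a s"]) auto
qed

lemma principal_submodule: "submodule D (principal D a)"
  unfolding principal_def submodule_def
  using zero_mem add_mem mult_mem
  by (auto simp: distrib_left[symmetric] mult.left_commute intro: image_eqI)

lemma smult_submodule: "submodule D I \<Longrightarrow> submodule D (smult_set z I)"
  unfolding submodule_def smult_set_def
  by (auto simp: distrib_left[symmetric] mult.left_commute intro: image_eqI)

lemma ideal_sum_submodule:
  assumes "submodule D I" "submodule D J"
  shows "submodule D (ideal_sum I J)"
  unfolding submodule_def ideal_sum_def
proof (intro conjI ballI)
  show "0 \<in> {j + l |j l. j \<in> I \<and> l \<in> J}" using assms unfolding submodule_def by force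
next
  fix x y assume "x \<in> {j + l |j l. j \<in> I \<and> l \<in> J}" "y \<in> {j + l |j l. j \<in> I \<and> l \<in> J}"
  then obtain j1 l1 j2 l2 where h: "x = j1 + l1" "y = j2 + l2" "j1 \<in> I" "l1 \<in> J" "j2 \<in> I" "l2 \<in> J"
    by blast
  have "x + y = (j1 + j2) + (l1 + l2)" using h by (simp add: ac_simps)
  then show "x + y \<in> {j + l |j l. j \<in> I \<and> l \<in> J}" using h assms unfolding submodule_def by blast
next
  fix d x assume "d \<in> D" "x \<in> {j + l |j l. j \<in> I \<and> l \<in> J}"
  then obtain j l where h: "x = j + l" "j \<in> I" "l \<in> J" by blast
  have "d * x = d * j + d * l" using h by (simp add: distrib_left)
  then show "d * x \<in> {j + l |j l. j \<in> I \<and> l \<in> J}" using h assms \<open>d \<in> D\<close>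
    unfolding submodule_def by blast
qed

lemma ideal_sum_upper1: "0 \<in> J \<Longrightarrow> I \<subseteq> ideal_sum I J"
  unfolding ideal_sum_def by force

lemma ideal_sum_upper2: "0 \<in> I \<Longrightarrow> J \<subseteq> ideal_sum I J"
  unfolding ideal_sum_def by force

lemma ideal_sum_mono: "I \<subseteq> I' \<Longrightarrow> J \<subseteq> J' \<Longrightarrow> ideal_sum I J \<subseteq> ideal_sum I' J'"
  unfolding ideal_sum_def by blast

lemma ideal_sum_subset_D: "I \<subseteq> D \<Longrightarrow> J \<subseteq> D \<Longrightarrow> ideal_sum I J \<subseteq> D"
  unfolding ideal_sum_def using add_mem by auto

lemma submodule_Union_chain:
  assumes "C \<noteq> {}" "\<forall>X\<in>C. submodule D X" "\<forall>X\<in>C. \<forall>Y\<in>C. X \<subseteq> Y \<or> Y \<subseteq> X"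
  shows "submodule D (\<Union>C)"
  unfolding submodule_def
proof (intro conjI ballI)
  show "0 \<in> \<Union>C" using assms unfolding submodule_def by blast
next
  fix a b assume "a \<in> \<Union>C" "b \<in> \<Union>C"
  then obtain X Y where XY: "X \<in> C" "Y \<in> C" "a \<in> X" "b \<in> Y" by auto
  then consider "X \<subseteq> Y" | "Y \<subseteq> X" using assms(3) by blast
  then show "a + b \<in> \<Union>C"
    by cases (use XY assms(2) in \<open>unfold submodule_def, blast+\<close>)
next
  fix d a assume "d \<in> D" "a \<in> \<Union>C"
  then show "d * a \<in> \<Union>C" using assms unfolding submodule_def by blast
qed

lemma frac_ideal_D: "frac_ideal D D"
  unfolding frac_ideal_def using submodule_D zero_mem one_mem mult_mem
  by (auto intro!: bexI[of _ 1])

lemma frac_ideal_if_integral: "submodule D I \<Longrightarrow> I \<subseteq> D \<Longrightarrow> I \<noteq> {0} \<Longrightarrow> frac_ideal D I"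
  unfolding frac_ideal_def using one_mem by (auto intro!: bexI[of _ 1])

lemma star_subset_D: "frac_ideal D I \<Longrightarrow> I \<subseteq> D \<Longrightarrow> star I \<subseteq> D"
  using star_mono[OF _ frac_ideal_D, of I] star_D by auto

lemma star_eq_D_if_one_mem:
  assumes "frac_ideal D I" "I \<subseteq> D" "1 \<in> star I"
  shows "star I = D"
  using submodule_eq_D_if_one star_subset_D assms star_frac_ideal[OF assms(1)]
  unfolding frac_ideal_def by blast

lemma common_denominator: "finite F \<Longrightarrow> \<exists>d\<in>D. d \<noteq> 0 \<and> (\<forall>f\<in>F. d * f \<in> D)"
proof (induction F rule: finite_induct)
  case empty
  then show ?case using one_mem by (intro bexI[of _ 1]) auto
next
  case (insert f F)
  then obtain d where d: "d \<in> D" "d \<noteq> 0" "\<forall>g\<in>F. d * g \<in> D" by blast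
  obtain a b where ab: "a \<in> D" "b \<in> D" "b \<noteq> 0" "f = a / b" using fraction_exists by blast
  have "(d * b) * f = d * a" using ab by simp
  moreover have "(d * b) * g \<in> D" if "g \<in> F" for g
    using mult_mem[OF ab(2) d(3)[rule_format, OF that]] by (simp add: ac_simps)
  ultimately have "\<forall>g\<in>insert f F. (d * b) * g \<in> D" using d ab mult_mem by auto
  then show ?case using d ab mult_mem by (intro bexI[of _ "d * b"]) auto
qed

lemma frac_ideal_if_finitely_generated:
  assumes "finitely_generated D J" "J \<noteq> {0}"
  shows "frac_ideal D J"
proof -
  obtain F where F: "finite F" "J = gen D F" using assms(1) unfolding finitely_generated_def by blast
  obtain d where d: "d \<in> D" "d \<noteq> 0" "\<forall>f\<in>F. d * f \<in> D" using common_denominator[OF F(1)] by blast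
  have "\<forall>x\<in>J. d * x \<in> D"
  proof
    fix x assume "x \<in> J"
    then obtain G a where G: "finite G" "G \<subseteq> F" "\<forall>s\<in>G. a s \<in> D" "x = (\<Sum>s\<in>G. a s * s)"
      using F unfolding gen_def by blast
    have "d * x = (\<Sum>s\<in>G. a s * (d * s))" using G by (simp add: sum_distrib_left ac_simps)
    also have "\<dots> \<in> D" using G d by (intro sum_mem) (auto intro: mult_mem)
    finally show "d * x \<in> D" .
  qed
  then show ?thesis unfolding frac_ideal_def using gen_submodule F assms(2) d by auto
qed

lemma integral_star_idealD:
  assumes "integral_star_ideal D star N"
  shows "submodule D N" "N \<subseteq> D" "N \<noteq> {0}" "frac_ideal D N" "star N = N" "0 \<in> N"
proof -
  show "frac_ideal D N" "star N = N" "N \<subseteq> D"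
    using assms unfolding integral_star_ideal_def star_ideal_def by auto
  then show "submodule D N" "N \<noteq> {0}" unfolding frac_ideal_def by auto
  then show "0 \<in> N" unfolding submodule_def by blast
qed

lemma one_not_mem_proper: "integral_star_ideal D star N \<Longrightarrow> N \<noteq> D \<Longrightarrow> 1 \<notin> N"
  using submodule_eq_D_if_one integral_star_idealD by blast

lemma integral_star_ideal_star: "frac_ideal D J \<Longrightarrow> J \<subseteq> D \<Longrightarrow> integral_star_ideal D star (star J)"
  unfolding integral_star_ideal_def star_ideal_def
  using star_frac_ideal star_idem star_subset_D by auto

section \<open>Maximal star ideals\<close>

text \<open>This is where finite character enters: an element of the star of a chain union
  already lies in the star of a finitely generated ideal, hence of a single member.\<close>
lemma star_Union_chain:
  assumes C: "C \<noteq> {}" "\<And>X. X \<in> C \<Longrightarrow> integral_star_ideal D star X" "subset.chain A C"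
  shows "integral_star_ideal D star (\<Union>C)"
proof -
  have chain: "\<forall>X\<in>C. \<forall>Y\<in>C. X \<subseteq> Y \<or> Y \<subseteq> X"
    using C(3) unfolding subset.chain_def by blast
  have sub: "submodule D (\<Union>C)"
    using submodule_Union_chain[OF C(1) _ chain] integral_star_idealD(1)[OF C(2)] by blast
  have UD: "\<Union>C \<subseteq> D" using integral_star_idealD(2)[OF C(2)] by blast
  obtain X where X: "X \<in> C" using C(1) by blast
  have "X \<noteq> {0}" "0 \<in> X" using integral_star_idealD(3,6)[OF C(2)[OF X]] by auto
  then have "\<Union>C \<noteq> {0}" using X by blast
  then have frac: "frac_ideal D (\<Union>C)" using frac_ideal_if_integral sub UD by blast
  have "star (\<Union>C) \<subseteq> \<Union>C"
  proof
    fix x assume "x \<in> star (\<Union>C)"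
    then obtain J where J: "x \<in> star J" "J \<subseteq> \<Union>C" "J \<noteq> {0}" "finitely_generated D J"
      using star_finite_character[OF frac] by blast
    obtain F where F: "finite F" "J = gen D F" using J(4) unfolding finitely_generated_def by blast
    have "F \<subseteq> \<Union>C" using F(2) J(2) mem_gen by blast
    then obtain X where X: "X \<in> C" "F \<subseteq> X"
      using finite_subset_Union_chain[OF F(1) _ C(1,3)] by metis
    note XP = integral_star_idealD[OF C(2)[OF X(1)]]
    have "J \<subseteq> X" unfolding F(2) using gen_least[OF XP(1) X(2)] .
    then have "star J \<subseteq> X"
      using star_mono[OF frac_ideal_if_finitely_generated[OF J(4,3)] XP(4)] XP(5) by simp
    then show "x \<in> \<Union>C" using J(1) X(1) by blast
  qed
  then have "star (\<Union>C) = \<Union>C" using star_extensive[OF frac] by blast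
  then show ?thesis
    unfolding integral_star_ideal_def star_ideal_def using frac UD by blast
qed

lemma exists_maximal_star_ideal:
  assumes J: "frac_ideal D J" "J \<subseteq> D" "star J \<noteq> D"
  obtains M where "maximal_star_ideal D star M" "star J \<subseteq> M"
proof -
  define A where "A = {N. integral_star_ideal D star N \<and> N \<noteq> D \<and> star J \<subseteq> N}"
  have JA: "star J \<in> A" unfolding A_def using integral_star_ideal_star[OF J(1,2)] J(3) by auto
  have "\<exists>U\<in>A. \<forall>X\<in>C. X \<subseteq> U" if C: "C \<in> chains A" for C
  proof (cases "C = {}")
    case True
    then show ?thesis using JA by auto
  next
    case False
    have CA: "\<And>X. X \<in> C \<Longrightarrow> integral_star_ideal D star X \<and> X \<noteq> D \<and> star J \<subseteq> X"
      using C unfolding chains_def chain_subset_def A_def by blast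
    have ch: "subset.chain A C"
      using C unfolding chains_def chain_subset_def subset.chain_def by blast
    have "integral_star_ideal D star (\<Union>C)"
      using star_Union_chain[OF False _ ch] CA by blast
    moreover have "1 \<notin> \<Union>C" using CA one_not_mem_proper by blast
    moreover obtain X where "X \<in> C" using False by blast
    then have "star J \<subseteq> \<Union>C" using CA by blast
    ultimately have "\<Union>C \<in> A" unfolding A_def using one_mem by blast
    then show ?thesis by blast
  qed
  then obtain M where M: "M \<in> A" "\<forall>X\<in>A. M \<subseteq> X \<longrightarrow> X = M"
    using Zorn_Lemma2[of A] by blast
  have "maximal_star_ideal D star M"
    using M unfolding maximal_star_ideal_def A_def by blast
  then show thesis using that M unfolding A_def by blast
qed

text \<open>The colon ideal \<open>K = (I : z)\<close> contains \<open>u\<close>, so it lies in no maximal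
  star ideal; hence \<open>K\<^sup>* = D\<close> and \<open>z D = (z K)\<^sup>* \<subseteq> I\<close>.\<close>
lemma mem_if_mult_mem_outside_maximal:
  assumes I: "integral_star_ideal D star I" and z: "z \<in> D" and u: "u \<in> D" "u * z \<in> I"
    and outside: "\<And>N. maximal_star_ideal D star N \<Longrightarrow> I \<subseteq> N \<Longrightarrow> u \<notin> N"
  shows "z \<in> I"
proof (cases "z = 0")
  case True
  then show ?thesis using integral_star_idealD(6)[OF I] by simp
next
  case False
  note IP = integral_star_idealD[OF I]
  define K where "K = {d\<in>D. d * z \<in> I}"
  have subK: "submodule D K"
    using IP(1) zero_mem add_mem mult_mem unfolding K_def submodule_def
    by (auto simp: distrib_right mult.assoc)
  have KD: "K \<subseteq> D" unfolding K_def by blast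
  have IK: "I \<subseteq> K" using IP(1,2) z unfolding K_def submodule_def by (auto simp: mult.commute)
  then have "K \<noteq> {0}" using IP(3,6) by blast
  then have fK: "frac_ideal D K" using frac_ideal_if_integral[OF subK KD] by blast
  have "star K = D"
  proof (rule ccontr)
    assume "star K \<noteq> D"
    then obtain N where N: "maximal_star_ideal D star N" "star K \<subseteq> N"
      using exists_maximal_star_ideal[OF fK KD] by blast
    have "u \<in> K" unfolding K_def using u by blast
    then have "u \<in> N" using N(2) star_extensive[OF fK] by blast
    moreover have "I \<subseteq> N" using IK N(2) star_extensive[OF fK] by blast
    ultimately show False using outside[OF N(1)] by blast
  qed
  then have "star (smult_set z K) = smult_set z D" using star_smult[OF False fK] by simp
  moreover have zKI: "smult_set z K \<subseteq> I" unfolding smult_set_def K_def by (auto simp: mult.commute)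
  moreover obtain i where i: "i \<in> I" "i \<noteq> 0" using IP(3,6) by blast
  have "z * i \<in> smult_set z K" unfolding smult_set_def using IK i(1) by blast
  then have "smult_set z K \<noteq> {0}" using False i(2) by force
  then have "frac_ideal D (smult_set z K)"
    using frac_ideal_if_integral[OF smult_submodule[OF subK]] zKI IP(2) by blast
  then have "star (smult_set z K) \<subseteq> I" using star_mono[OF _ IP(4) zKI] IP(5) by simp
  moreover have "z \<in> smult_set z D" unfolding smult_set_def using one_mem by force
  ultimately show ?thesis by blast
qed

lemma maximal_star_idealD:
  assumes "maximal_star_ideal D star M"
  shows "integral_star_ideal D star M" "1 \<notin> M" "submodule D M" "M \<subseteq> D"
    "frac_ideal D M" "star M = M" "0 \<in> M" "M \<noteq> {0}"
  using assms integral_star_idealD one_not_mem_proper unfolding maximal_star_ideal_def by auto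

lemma maximal_star_ideal_eq:
  "maximal_star_ideal D star M \<Longrightarrow> maximal_star_ideal D star N \<Longrightarrow> M \<subseteq> N \<Longrightarrow> N = M"
  unfolding maximal_star_ideal_def by blast

lemma maximal_star_ideal_prime:
  assumes M: "maximal_star_ideal D star M"
  shows "prime_ideal D M"
  unfolding prime_ideal_def
proof (intro conjI ballI impI)
  show "submodule D M" "M \<subseteq> D" "M \<noteq> D" using maximal_star_idealD[OF M] one_mem by auto
next
  fix a b assume ab: "a \<in> D" "b \<in> D" "a * b \<in> M"
  have "b \<in> M" if "a \<notin> M"
    using mem_if_mult_mem_outside_maximal[OF maximal_star_idealD(1)[OF M] ab(2,1,3)]
      maximal_star_ideal_eq[OF M] that by metis
  then show "a \<in> M \<or> b \<in> M" by blast
qed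

section \<open>The maximal star ideal of a star-homog ideal\<close>

lemma frac_ideal_ideal_sum:
  assumes "frac_ideal D I" "I \<subseteq> D" "frac_ideal D J" "J \<subseteq> D"
  shows "frac_ideal D (ideal_sum I J)"
proof -
  have sub: "submodule D I" "submodule D J" and "I \<noteq> {0}" "0 \<in> I" "0 \<in> J"
    using assms unfolding frac_ideal_def submodule_def by auto
  moreover have "I \<subseteq> ideal_sum I J" using ideal_sum_upper1 \<open>0 \<in> J\<close> .
  ultimately have "ideal_sum I J \<noteq> {0}" by blast
  then show ?thesis
    by (rule frac_ideal_if_integral[OF ideal_sum_submodule[OF sub] ideal_sum_subset_D[OF assms(2,4)]])
qed

lemma star_ideal_sum_maximal:
  assumes M1: "maximal_star_ideal D star M1" and M2: "maximal_star_ideal D star M2"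
    and "M1 \<noteq> M2"
  shows "star (ideal_sum M1 M2) = D"
proof (rule ccontr)
  note P1 = maximal_star_idealD[OF M1] and P2 = maximal_star_idealD[OF M2]
  let ?S = "ideal_sum M1 M2"
  have frac: "frac_ideal D ?S" using frac_ideal_ideal_sum P1(5,4) P2(5,4) by blast
  assume "star ?S \<noteq> D"
  then obtain N where N: "maximal_star_ideal D star N" "star ?S \<subseteq> N"
    using exists_maximal_star_ideal[OF frac ideal_sum_subset_D[OF P1(4) P2(4)]] by blast
  have "?S \<subseteq> N" using star_extensive[OF frac] N(2) by blast
  then have "M1 \<subseteq> N" "M2 \<subseteq> N"
    using ideal_sum_upper1[OF P2(7)] ideal_sum_upper2[OF P1(7)] by blast+
  then have "N = M1" "N = M2"
    using maximal_star_ideal_eq[OF M1 N(1)] maximal_star_ideal_eq[OF M2 N(1)] by blast+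
  then show False using \<open>M1 \<noteq> M2\<close> by simp
qed

lemma finite_subset_ideal_sum_split:
  assumes "finite F" "F \<subseteq> ideal_sum A B"
  obtains FA FB where "finite FA" "FA \<subseteq> A" "finite FB" "FB \<subseteq> B"
    "F \<subseteq> ideal_sum (gen D FA) (gen D FB)"
proof -
  have "\<forall>f\<in>F. \<exists>a b. a \<in> A \<and> b \<in> B \<and> f = a + b" using assms(2) unfolding ideal_sum_def by blast
  then obtain fa fb where split: "\<forall>f\<in>F. fa f \<in> A \<and> fb f \<in> B \<and> f = fa f + fb f" by metis
  have "F \<subseteq> ideal_sum (gen D (fa ` F)) (gen D (fb ` F))"
    unfolding ideal_sum_def using split by (blast intro: mem_gen)
  then show thesis using that[of "fa ` F" "fb ` F"] split assms(1) by blast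
qed

lemma distinct_maximal_finite_witness:
  assumes M1: "maximal_star_ideal D star M1" and M2: "maximal_star_ideal D star M2"
    and "M1 \<noteq> M2"
  obtains F FA FB where "finite F" "gen D F \<noteq> {0}" "1 \<in> star (gen D F)"
    "finite FA" "FA \<subseteq> M1" "finite FB" "FB \<subseteq> M2"
    "gen D F \<subseteq> ideal_sum (gen D FA) (gen D FB)"
proof -
  note P1 = maximal_star_idealD[OF M1] and P2 = maximal_star_idealD[OF M2]
  let ?S = "ideal_sum M1 M2"
  have frac: "frac_ideal D ?S" using frac_ideal_ideal_sum P1(5,4) P2(5,4) by blast
  have "1 \<in> star ?S" using star_ideal_sum_maximal[OF assms] one_mem by simp
  then obtain J where J: "1 \<in> star J" "J \<subseteq> ?S" "J \<noteq> {0}" "finitely_generated D J"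
    using star_finite_character[OF frac] by blast
  obtain F where F: "finite F" "J = gen D F" using J(4) unfolding finitely_generated_def by blast
  have "F \<subseteq> ?S" using J(2) F(2) mem_gen by blast
  then obtain FA FB where FAB: "finite FA" "FA \<subseteq> M1" "finite FB" "FB \<subseteq> M2"
    "F \<subseteq> ideal_sum (gen D FA) (gen D FB)"
    by (rule finite_subset_ideal_sum_split[OF F(1)])
  have "gen D F \<subseteq> ideal_sum (gen D FA) (gen D FB)"
    using gen_least[OF ideal_sum_submodule[OF gen_submodule gen_submodule] FAB(5)] .
  with F FAB J(1,3) show thesis by (intro that) simp_all
qed

lemma star_gen_below_maximal:
  assumes M: "maximal_star_ideal D star M" and G: "finite G" "G \<subseteq> M" "gen D G \<noteq> {0}"
  shows "integral_star_ideal D star (star (gen D G))" "finite_type D star (star (gen D G))"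
    "star (gen D G) \<subseteq> M" "star (gen D G) \<noteq> D"
proof -
  note P = maximal_star_idealD[OF M]
  have frac: "frac_ideal D (gen D G)"
    using frac_ideal_if_finitely_generated G unfolding finitely_generated_def by blast
  have sub: "gen D G \<subseteq> M" using gen_least[OF P(3) G(2)] .
  then show "integral_star_ideal D star (star (gen D G))"
    using integral_star_ideal_star[OF frac] P(4) by (meson order_trans)
  show "finite_type D star (star (gen D G))"
    unfolding finite_type_def finitely_generated_def using G(1,3) by (intro exI conjI) auto
  show "star (gen D G) \<subseteq> M" using star_mono[OF frac P(5) sub] P(6) by simp
  then show "star (gen D G) \<noteq> D" using P(2) one_mem by blast
qed

text \<open>If \<open>I\<close> lay in two maximal star ideals, the witness above, enlarged by a finite
  generating set of \<open>I\<close>, would give two proper finite-type star ideals over \<open>I\<close> whose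
  sum has star \<open>D\<close>.\<close>
lemma star_homog_unique_maximal:
  assumes H: "star_homog D star I"
    and M1: "maximal_star_ideal D star M1" "I \<subseteq> M1"
    and M2: "maximal_star_ideal D star M2" "I \<subseteq> M2"
  shows "M1 = M2"
proof (rule ccontr)
  assume "M1 \<noteq> M2"
  then obtain F FA FB where F: "finite F" "gen D F \<noteq> {0}" "1 \<in> star (gen D F)"
    "finite FA" "FA \<subseteq> M1" "finite FB" "FB \<subseteq> M2"
    "gen D F \<subseteq> ideal_sum (gen D FA) (gen D FB)"
    by (rule distinct_maximal_finite_witness[OF M1(1) M2(1)])
  obtain F0 where F0: "finite F0" "gen D F0 \<noteq> {0}" "I = star (gen D F0)"
    using H unfolding star_homog_def finite_type_def finitely_generated_def by blast
  have frac_gen: "frac_ideal D (gen D G)" if "finite G" "gen D G \<noteq> {0}" for G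
    using frac_ideal_if_finitely_generated that unfolding finitely_generated_def by blast
  have F0I: "F0 \<subseteq> I" using star_extensive[OF frac_gen[OF F0(1,2)]] F0(3) mem_gen by blast
  have "0 \<in> gen D F0" using gen_submodule unfolding submodule_def by blast
  then have nonzero: "gen D (F0 \<union> G) \<noteq> {0}" for G
    using F0(2) gen_mono[of F0 "F0 \<union> G"] by blast
  have enlarged: "integral_star_ideal D star J \<and> finite_type D star J \<and> J \<noteq> D \<and> I \<subseteq> J
      \<and> gen D G \<subseteq> J"
    if "J = star (gen D (F0 \<union> G))" "finite G" "G \<subseteq> M" "maximal_star_ideal D star M" "I \<subseteq> M"
    for J G M
  proof -
    have fin: "finite (F0 \<union> G)" using F0(1) that(2) by blast
    have frac: "frac_ideal D (gen D (F0 \<union> G))" using frac_gen[OF fin nonzero] .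
    have "gen D F0 \<subseteq> gen D (F0 \<union> G)" "gen D G \<subseteq> gen D (F0 \<union> G)" by (simp_all add: gen_mono)
    then have "I \<subseteq> J" "gen D G \<subseteq> J"
      unfolding F0(3) that(1) using star_mono[OF frac_gen[OF F0(1,2)] frac] star_extensive[OF frac]
      by blast+
    moreover have "F0 \<union> G \<subseteq> M" using F0I that(3,5) by blast
    ultimately show ?thesis
      using star_gen_below_maximal[OF that(4) fin _ nonzero] that(1) by blast
  qed
  define J1 where "J1 = star (gen D (F0 \<union> FA))"
  define J2 where "J2 = star (gen D (F0 \<union> FB))"
  have J1: "integral_star_ideal D star J1" "finite_type D star J1" "J1 \<noteq> D" "I \<subseteq> J1"
      "gen D FA \<subseteq> J1"
    using enlarged[OF J1_def F(4,5) M1(1,2)] by blast+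
  have J2: "integral_star_ideal D star J2" "finite_type D star J2" "J2 \<noteq> D" "I \<subseteq> J2"
      "gen D FB \<subseteq> J2"
    using enlarged[OF J2_def F(6,7) M2(1,2)] by blast+
  have proper: "star (ideal_sum J1 J2) \<noteq> D"
    using H J1(1-4) J2(1-4) unfolding star_homog_def by blast
  note I1 = integral_star_idealD[OF J1(1)] and I2 = integral_star_idealD[OF J2(1)]
  have frac: "frac_ideal D (ideal_sum J1 J2)" using frac_ideal_ideal_sum[OF I1(4,2) I2(4,2)] .
  have "gen D F \<subseteq> ideal_sum J1 J2" using F(8) ideal_sum_mono[OF J1(5) J2(5)] by blast
  then have "1 \<in> star (ideal_sum J1 J2)" using star_mono[OF frac_gen[OF F(1,2)] frac] F(3) by blast
  then show False
    using star_eq_D_if_one_mem[OF frac ideal_sum_subset_D[OF I1(2) I2(2)]] proper by blast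
qed

lemma M_of_star_homog:
  assumes H: "star_homog D star I"
  shows "maximal_star_ideal D star (M_of D star I)" "I \<subseteq> M_of D star I"
    "\<And>N. maximal_star_ideal D star N \<Longrightarrow> I \<subseteq> N \<Longrightarrow> N = M_of D star I"
proof -
  have I: "integral_star_ideal D star I" "I \<noteq> D" using H unfolding star_homog_def by auto
  note IP = integral_star_idealD[OF I(1)]
  obtain N where N: "maximal_star_ideal D star N" "I \<subseteq> N"
    using exists_maximal_star_ideal[OF IP(4,2)] IP(5) I(2) by metis
  have "maximal_star_ideal D star (M_of D star I) \<and> I \<subseteq> M_of D star I"
    unfolding M_of_def by (rule theI[of _ N]) (use N star_homog_unique_maximal[OF H] in auto)
  then show "maximal_star_ideal D star (M_of D star I)" "I \<subseteq> M_of D star I"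
    "\<And>N'. maximal_star_ideal D star N' \<Longrightarrow> I \<subseteq> N' \<Longrightarrow> N' = M_of D star I"
    using star_homog_unique_maximal[OF H] by blast+
qed

section \<open>Height one from type 1\<close>

lemma integral_ideal_prod:
  assumes J: "integral_ideal D J" and L: "integral_ideal D L"
  shows "integral_ideal D (ideal_prod D J L)"
proof -
  have "{j * l |j l. j \<in> J \<and> l \<in> L} \<subseteq> D"
    using J L mult_mem unfolding integral_ideal_def by blast
  then have "ideal_prod D J L \<subseteq> D" unfolding ideal_prod_def by (rule gen_least[OF submodule_D])
  moreover have "\<exists>a\<in>A. a \<noteq> 0" if "integral_ideal D A" for A
    using that unfolding integral_ideal_def submodule_def by blast
  then obtain j l where "j \<in> J" "j \<noteq> 0" "l \<in> L" "l \<noteq> 0" using J L by meson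
  then have "j * l \<in> ideal_prod D J L" "j * l \<noteq> 0"
    unfolding ideal_prod_def by (auto intro: mem_gen)
  then have "ideal_prod D J L \<noteq> {0}" by blast
  ultimately show ?thesis
    unfolding integral_ideal_def using gen_submodule[of "{j * l |j l. j \<in> J \<and> l \<in> L}"]
    unfolding ideal_prod_def by blast
qed

lemma integral_ideal_prod_list:
  "\<forall>I\<in>set Is. integral_ideal D I \<Longrightarrow> integral_ideal D (ideal_prod_list D Is)"
proof (induction Is)
  case Nil
  show ?case
    unfolding ideal_prod_list_def integral_ideal_def using submodule_D one_mem by auto
next
  case (Cons I Is)
  then show ?case unfolding ideal_prod_list_def using integral_ideal_prod by simp
qed

lemma prime_ideal_prod_list:
  assumes Q: "prime_ideal D Q" and Is: "\<forall>I\<in>set Is. integral_ideal D I"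
    and sub: "ideal_prod_list D Is \<subseteq> Q"
  shows "\<exists>I\<in>set Is. I \<subseteq> Q"
  using Is sub
proof (induction Is)
  case Nil
  then have "1 \<in> Q" using one_mem by (auto simp: ideal_prod_list_def)
  then show ?case using Q submodule_eq_D_if_one unfolding prime_ideal_def by blast
next
  case (Cons I Is)
  let ?R = "ideal_prod_list D Is"
  show ?case
  proof (rule ccontr)
    assume "\<not> ?thesis"
    then obtain j l where j: "j \<in> I" "j \<notin> Q" and l: "l \<in> ?R" "l \<notin> Q"
      using Cons by auto
    have "j * l \<in> ideal_prod D I ?R" unfolding ideal_prod_def using j l by (auto intro: mem_gen)
    then have "j * l \<in> Q" using Cons.prems(2) by (auto simp: ideal_prod_list_def)
    moreover have "j \<in> D" "l \<in> D"
      using Cons.prems(1) integral_ideal_prod_list j l unfolding integral_ideal_def by auto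
    ultimately show False using Q j l unfolding prime_ideal_def by blast
  qed
qed

lemma star_homog_integral_ideal: "star_homog D star I \<Longrightarrow> integral_ideal D I"
  unfolding star_homog_def integral_ideal_def using integral_star_idealD(1-3) by simp

lemma prime_power_mem: "prime_ideal D Q \<Longrightarrow> y \<in> D \<Longrightarrow> y ^ n \<in> Q \<Longrightarrow> y \<in> Q"
proof (induction n)
  case 0
  then show ?case using submodule_eq_D_if_one unfolding prime_ideal_def by auto
next
  case (Suc n)
  then show ?case using power_mem[of y n] unfolding prime_ideal_def by auto
qed

lemma star_homog_type1_factor_in_prime:
  assumes T: "star_SH_type1 D star" and Q: "prime_ideal D Q"
    and x: "x \<in> Q" "x \<noteq> 0" "\<not> is_unit_in D x"
  obtains I where "star_homog_type1 D star I" "I \<subseteq> Q"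
proof -
  have QD: "submodule D Q" "Q \<subseteq> D" using Q unfolding prime_ideal_def by auto
  obtain Is where Is: "\<forall>I\<in>set Is. star_homog_type1 D star I"
    "principal D x = star (ideal_prod_list D Is)"
    using T x QD(2) unfolding star_SH_type1_def by blast
  have factors: "\<forall>I\<in>set Is. integral_ideal D I"
    using Is(1) star_homog_integral_ideal unfolding star_homog_type1_def by blast
  then have "integral_ideal D (ideal_prod_list D Is)" by (rule integral_ideal_prod_list)
  then have "ideal_prod_list D Is \<subseteq> principal D x"
    unfolding Is(2) integral_ideal_def using star_extensive frac_ideal_if_integral by blast
  also have "principal D x \<subseteq> Q"
    using QD x(1) unfolding principal_def submodule_def by (auto simp: mult.commute)
  finally show thesis using prime_ideal_prod_list[OF Q factors] Is(1) that by blast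
qed

lemma M_of_subset_prime:
  assumes I: "star_homog_type1 D star I" and Q: "prime_ideal D Q" "I \<subseteq> Q"
  shows "M_of D star I \<subseteq> Q"
proof
  fix y assume y: "y \<in> M_of D star I"
  have H: "star_homog D star I" using I unfolding star_homog_type1_def by blast
  note MP = maximal_star_idealD[OF M_of_star_homog(1)[OF H]]
  show "y \<in> Q"
  proof (cases "y = 0")
    case True
    then show ?thesis using Q unfolding prime_ideal_def submodule_def by simp
  next
    case False
    then obtain n where n: "smult_set (y ^ n) (localization D (M_of D star I)) \<inter> D \<subseteq> I"
      using I y unfolding star_homog_type1_def by blast
    have yD: "y \<in> D" using y MP(4) by blast
    have "1 \<in> localization D (M_of D star I)"
      unfolding localization_def using one_mem MP(2) by force
    then have "y ^ n \<in> smult_set (y ^ n) (localization D (M_of D star I))"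
      unfolding smult_set_def by force
    then have "y ^ n \<in> Q" using n Q(2) power_mem[OF yD] by blast
    then show ?thesis using prime_power_mem[OF Q(1) yD] by blast
  qed
qed

lemma height_one_if_star_SH_type1:
  assumes T: "star_SH_type1 D star" and M: "maximal_star_ideal D star M"
  shows "height_one D M"
  unfolding height_one_def
proof (intro conjI allI impI)
  note MP = maximal_star_idealD[OF M]
  show "prime_ideal D M" using maximal_star_ideal_prime[OF M] .
  show "M \<noteq> {0}" using MP(8) .
  fix Q assume Q: "prime_ideal D Q \<and> Q \<subseteq> M"
  show "Q = {0} \<or> Q = M"
  proof (cases "Q = {0}")
    case False
    moreover have "0 \<in> Q" using Q unfolding prime_ideal_def submodule_def by blast
    ultimately obtain x where x: "x \<in> Q" "x \<noteq> 0" by blast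
    have "\<not> is_unit_in D x"
    proof
      assume "is_unit_in D x"
      then obtain y where "y \<in> D" "x * y = 1" unfolding is_unit_in_def by blast
      moreover have "x \<in> M" using x(1) Q by blast
      ultimately have "1 \<in> M" using MP(3) unfolding submodule_def by (metis mult.commute)
      then show False using MP(2) by blast
    qed
    then obtain I where I: "star_homog_type1 D star I" "I \<subseteq> Q"
      using star_homog_type1_factor_in_prime[OF T conjunct1[OF Q] x] by blast
    have "star_homog D star I" using I(1) unfolding star_homog_type1_def by blast
    moreover have "I \<subseteq> M" using I(2) Q by blast
    ultimately have "M = M_of D star I" using M_of_star_homog(3) M by blast
    then show ?thesis using M_of_subset_prime[OF I(1) conjunct1[OF Q] I(2)] Q by blast
  qed simp
qed

section \<open>Type 1 from height one\<close>

lemma prime_if_maximal_disjoint: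
  assumes S: "1 \<in> S" "\<And>a b. a \<in> S \<Longrightarrow> b \<in> S \<Longrightarrow> a * b \<in> S"
    and P: "submodule D P" "P \<subseteq> D" "P \<inter> S = {}"
    and maximal: "\<And>X. submodule D X \<Longrightarrow> X \<subseteq> D \<Longrightarrow> P \<subseteq> X \<Longrightarrow> X \<inter> S = {} \<Longrightarrow> X = P"
  shows "prime_ideal D P"
proof -
  have closed: "d * p \<in> P" if "d \<in> D" "p \<in> P" for d p
    using P(1) that unfolding submodule_def by blast
  have meets: "\<exists>p d. p \<in> P \<and> d \<in> D \<and> p + a * d \<in> S" if a: "a \<in> D" "a \<notin> P" for a
  proof (rule ccontr)
    assume none: "\<not> ?thesis"
    let ?Pa = "ideal_sum P (principal D a)"
    have sub: "submodule D ?Pa" using ideal_sum_submodule[OF P(1) principal_submodule] .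
    have "principal D a \<subseteq> D" using a(1) mult_mem unfolding principal_def by blast
    then have "?Pa \<subseteq> D" using ideal_sum_subset_D[OF P(2)] by blast
    moreover have "0 \<in> principal D a" unfolding principal_def using zero_mem by force
    then have "P \<subseteq> ?Pa" by (rule ideal_sum_upper1)
    moreover have "?Pa \<inter> S = {}" using none unfolding ideal_sum_def principal_def by blast
    ultimately have "?Pa = P" using maximal[OF sub] by blast
    moreover have "0 \<in> P" using P(1) unfolding submodule_def by blast
    then have "0 + a * 1 \<in> ?Pa" unfolding ideal_sum_def principal_def using one_mem by blast
    ultimately show False using a(2) by simp
  qed
  show ?thesis
    unfolding prime_ideal_def
  proof (intro conjI ballI impI)
    show "submodule D P" "P \<subseteq> D" using P(1,2) .
    show "P \<noteq> D" using S(1) P(3) one_mem by blast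
  next
    fix a b assume ab: "a \<in> D" "b \<in> D" "a * b \<in> P"
    show "a \<in> P \<or> b \<in> P"
    proof (rule ccontr)
      assume "\<not> (a \<in> P \<or> b \<in> P)"
      then obtain p1 d1 p2 d2 where e: "p1 \<in> P" "d1 \<in> D" "p1 + a * d1 \<in> S"
        "p2 \<in> P" "d2 \<in> D" "p2 + b * d2 \<in> S"
        using meets ab(1,2) by meson
      have "(p1 + a * d1) * (p2 + b * d2) = (p2 + b * d2) * p1 + (a * d1) * p2 + (d1 * d2) * (a * b)"
        by (simp add: algebra_simps)
      moreover have "p2 \<in> D" using e(4) P(2) by blast
      then have "(p2 + b * d2) * p1 \<in> P" "(a * d1) * p2 \<in> P" "(d1 * d2) * (a * b) \<in> P"
        using closed ab e add_mem mult_mem by simp_all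
      ultimately have "(p1 + a * d1) * (p2 + b * d2) \<in> P"
        using P(1) unfolding submodule_def by metis
      moreover have "(p1 + a * d1) * (p2 + b * d2) \<in> S" using S(2) e(3,6) .
      ultimately show False using P(3) by blast
    qed
  qed
qed

lemma exists_maximal_disjoint:
  assumes I: "submodule D I" "I \<subseteq> D" "I \<inter> S = {}"
  obtains P where "submodule D P" "P \<subseteq> D" "I \<subseteq> P" "P \<inter> S = {}"
    "\<And>X. submodule D X \<Longrightarrow> X \<subseteq> D \<Longrightarrow> P \<subseteq> X \<Longrightarrow> X \<inter> S = {} \<Longrightarrow> X = P"
proof -
  define A where "A = {P. submodule D P \<and> P \<subseteq> D \<and> I \<subseteq> P \<and> P \<inter> S = {}}"
  have IA: "I \<in> A" unfolding A_def using I by blast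
  have "\<exists>U\<in>A. \<forall>X\<in>C. X \<subseteq> U" if C: "C \<in> chains A" for C
  proof (cases "C = {}")
    case True
    then show ?thesis using IA by blast
  next
    case False
    have CA: "\<And>X. X \<in> C \<Longrightarrow> submodule D X \<and> X \<subseteq> D \<and> I \<subseteq> X \<and> X \<inter> S = {}"
      using C unfolding chains_def A_def by blast
    have ch: "\<forall>X\<in>C. \<forall>Y\<in>C. X \<subseteq> Y \<or> Y \<subseteq> X"
      using C unfolding chains_def chain_subset_def by blast
    have "submodule D (\<Union>C)" using submodule_Union_chain[OF False _ ch] CA by blast
    moreover have "\<Union>C \<subseteq> D" "\<Union>C \<inter> S = {}" using CA by blast+
    moreover obtain X where "X \<in> C" using False by blast
    then have "I \<subseteq> \<Union>C" using CA by blast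
    ultimately have "\<Union>C \<in> A" unfolding A_def by blast
    then show ?thesis by blast
  qed
  then obtain P where P: "P \<in> A" "\<forall>X\<in>A. P \<subseteq> X \<longrightarrow> X = P" using Zorn_Lemma2[of A] by blast
  have P': "submodule D P" "P \<subseteq> D" "I \<subseteq> P" "P \<inter> S = {}" using P(1) unfolding A_def by blast+
  have "X = P" if "submodule D X" "X \<subseteq> D" "P \<subseteq> X" "X \<inter> S = {}" for X
    using P(2) P'(3) that unfolding A_def by blast
  then show thesis using that P' by blast
qed

text \<open>Height one makes \<open>M\<close> minimal over \<open>I\<close>: an ideal over \<open>I\<close> maximal with
  respect to missing \<open>{y\<^sup>n s | s \<notin> M}\<close> would be a prime strictly between \<open>0\<close> and \<open>M\<close>.\<close>
lemma exists_power_mult_mem_if_height_one: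
  assumes M: "height_one D M" and I: "integral_ideal D I" "I \<subseteq> M" and y: "y \<in> M"
  obtains n s where "s \<in> D" "s \<notin> M" "y ^ n * s \<in> I"
proof -
  define S where "S = {y ^ n * s | n s. s \<in> D \<and> s \<notin> M}"
  have "I \<inter> S \<noteq> {}"
  proof
    assume disjoint: "I \<inter> S = {}"
    have prime: "prime_ideal D M" using M unfolding height_one_def by blast
    then have MD: "M \<subseteq> D" "1 \<notin> M"
      using submodule_eq_D_if_one unfolding prime_ideal_def by blast+
    have "1 = y ^ 0 * 1" by simp
    then have "1 \<in> S" unfolding S_def using one_mem MD(2) by blast
    moreover have "a * b \<in> S" if ab: "a \<in> S" "b \<in> S" for a b
    proof -
      obtain m s n t where "a = y ^ m * s" "b = y ^ n * t" "s \<in> D" "s \<notin> M" "t \<in> D" "t \<notin> M"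
        using ab unfolding S_def by blast
      moreover have "a * b = y ^ (m + n) * (s * t)" using calculation(1,2) by (simp add: power_add ac_simps)
      moreover have "s * t \<notin> M" using prime calculation(3-6) unfolding prime_ideal_def by blast
      ultimately show ?thesis unfolding S_def using mult_mem by blast
    qed
    moreover have "submodule D I" "I \<subseteq> D" using I(1) unfolding integral_ideal_def by blast+
    ultimately obtain P where P: "prime_ideal D P" "I \<subseteq> P" "P \<inter> S = {}"
      using exists_maximal_disjoint[of I S] disjoint prime_if_maximal_disjoint[of S] by metis
    have "P \<subseteq> M"
    proof
      fix p assume p: "p \<in> P"
      have "p = y ^ 0 * p" by simp
      moreover have "p \<in> D" using p P(1) unfolding prime_ideal_def by blast
      ultimately show "p \<in> M" using p P(3) unfolding S_def by blast
    qed
    moreover have "P \<noteq> {0}"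
      using I(1) P(2) unfolding integral_ideal_def submodule_def by blast
    ultimately have "P = M" using M P(1) unfolding height_one_def by blast
    moreover have "y = y ^ 1 * 1" by simp
    then have "y \<in> S" unfolding S_def using one_mem MD(2) by blast
    ultimately show False using y P(3) by blast
  qed
  then show thesis using that unfolding S_def by blast
qed

lemma star_homog_type1_if_height_one:
  assumes H: "star_homog D star I" and M: "height_one D (M_of D star I)"
  shows "star_homog_type1 D star I"
  unfolding star_homog_type1_def
proof (intro conjI ballI H)
  let ?M = "M_of D star I"
  note MO = M_of_star_homog[OF H]
  note MP = maximal_star_idealD[OF MO(1)]
  have prime: "prime_ideal D ?M" using maximal_star_ideal_prime[OF MO(1)] .
  have I: "integral_star_ideal D star I" using H unfolding star_homog_def by blast
  fix y assume y: "y \<in> ?M - {0}"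
  have yD: "y \<in> D" using y MP(4) by blast
  obtain n s where ns: "s \<in> D" "s \<notin> ?M" "y ^ n * s \<in> I"
    using exists_power_mult_mem_if_height_one[OF M star_homog_integral_ideal[OF H] MO(2)] y by blast
  show "\<exists>n>0. smult_set (y ^ n) (localization D ?M) \<inter> D \<subseteq> I"
  proof (intro exI[of _ "Suc n"] conjI subsetI)
    fix z assume z: "z \<in> smult_set (y ^ Suc n) (localization D ?M) \<inter> D"
    then obtain a t where at: "a \<in> D" "t \<in> D" "t \<notin> ?M" "z = y ^ Suc n * (a / t)"
      unfolding smult_set_def localization_def by blast
    have "t \<noteq> 0" using at(3) MP(7) by blast
    then have "(s * t) * z = (y * a) * (y ^ n * s)" using at(4) by (simp add: field_simps)
    moreover have "y * a \<in> D" using yD at(1) mult_mem by blast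
    ultimately have "(s * t) * z \<in> I"
      using ns(3) integral_star_idealD(1)[OF I] unfolding submodule_def by metis
    moreover have "s * t \<in> D" "s * t \<notin> ?M"
      using ns(1,2) at(2,3) prime mult_mem unfolding prime_ideal_def by blast+
    ultimately show "z \<in> I"
      using mem_if_mult_mem_outside_maximal[OF I _ \<open>s * t \<in> D\<close>] z MO(3) by blast
  qed simp
qed

end

theorem theoremP2:
  fixes D :: "'k::field set" and star :: "'k set \<Rightarrow> 'k set"
  assumes "integral_domain_qf D"
    and "star_operation D star"
    and "finite_character D star"
  shows "star_SH_type1 D star \<longleftrightarrow> star_weakly_Krull D star"
proof -
  interpret star_domain D star using assms by unfold_locales
  show ?thesis
  proof
    assume type1: "star_SH_type1 D star"
    then have "star_SH D star"
      unfolding star_SH_type1_def star_SH_def star_homog_type1_def by blast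
    then show "star_weakly_Krull D star"
      unfolding star_weakly_Krull_def using height_one_if_star_SH_type1[OF type1] by blast
  next
    assume weakly_Krull: "star_weakly_Krull D star"
    then have "star_homog_type1 D star I" if "star_homog D star I" for I
      using star_homog_type1_if_height_one[OF that] M_of_star_homog(1)[OF that]
      unfolding star_weakly_Krull_def by blast
    with weakly_Krull show "star_SH_type1 D star"
      unfolding star_weakly_Krull_def star_SH_def star_SH_type1_def by blast
  qed
qed

end
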